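(* For $\ell=0,1,\ldots,N$ let $$\hat{\mathcal{K}}_\ell(p,q)=\prod_{m=1}^N\prod_{n=1}^{N-\ell}\frac{\Gamma\big(i(p_m-q_n)/\hbar\mu-g/2\hbar\big)}{\Gamma\big(i(p_m-q_n)/\hbar\mu+g/2\hbar\big)},\qquad p\in\mathbb{C}^N,\ q\in\mathbb{C}^{N-\ell}.$$ Then for every $k\in\{1,\ldots,N\}$ and $\tau\in\{+,-\}$, as identities of meromorphic functions, $$\hat A_{\tau k,\rm nr}(p_1,\ldots,p_N)\hat{\mathcal{K}}_\ell(p,q)=\sum_{j=0}^{\min(k,\ell)}\binom{\ell}{j}\hat A_{-\tau(k-j),\rm nr}(q_1,\ldots,q_{N-\ell})\hat{\mathcal{K}}_\ell(p,q),$$ where $\hat A_{\pm m,\rm nr}(q_1,\ldots,q_{N-\ell})\equiv0$ for $m>N-\ell$ and $\hat A_{0,\rm nr}\equiv1$.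
   Context: Fix $\hbar,\mu,g>0$; $\Gamma$ is Euler's gamma function. The operator $\exp(\mp i\hbar\mu\partial_{p_m})$ acts on meromorphic $f$ by $f(p)\mapsto f(p_1,\ldots,p_m\mp i\hbar\mu,\ldots)$. For $n$ variables and $k=1,\ldots,n$, $$\hat A_{\pm k,\rm nr}(p)=\sum_{I\subset\{1,\ldots,n\},|I|=k}\ \prod_{m\in I,m'\notin I}\frac{p_m-p_{m'}\mp i\mu g}{p_m-p_{m'}}\prod_{m\in I}\exp(\mp i\hbar\mu\partial_{p_m}).$$ *)

theory Defs
  imports "HOL-Analysis.Analysis"
begin

text \<open>Points of C^n are modelled as functions nat => complex, of which only the
 coordinates 1..n matter. The sign tau is a boolean: True means +, False means -.\<close>

definition sgnc :: "bool \<Rightarrow> complex" where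
  "sgnc tau = (if tau then 1 else -1)"

text \<open>Shift operator: product over m in I of exp(-+ i hbar mu d/dp_m).\<close>
definition shift_vec :: "real \<Rightarrow> real \<Rightarrow> bool \<Rightarrow> nat set \<Rightarrow> (nat \<Rightarrow> complex) \<Rightarrow> (nat \<Rightarrow> complex)" where
  "shift_vec hbar mu tau I p = (\<lambda>j. if j \<in> I then p j - sgnc tau * \<i> * of_real hbar * of_real mu else p j)"

text \<open>The operator A_{tau k, nr} in n variables applied to f, evaluated at p.
 For k = 0 it is the identity, for k > n it is zero (the paper's conventions).\<close>
definition A_nr :: "real \<Rightarrow> real \<Rightarrow> real \<Rightarrow> bool \<Rightarrow> nat \<Rightarrow> nat \<Rightarrow>
    ((nat \<Rightarrow> complex) \<Rightarrow> complex) \<Rightarrow> (nat \<Rightarrow> complex) \<Rightarrow> complex" where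
  "A_nr hbar mu g tau n k f p =
     (\<Sum>I\<in>{I. I \<subseteq> {1..n} \<and> card I = k}.
        (\<Prod>m\<in>I. \<Prod>m'\<in>{1..n} - I.
            (p m - p m' - sgnc tau * \<i> * of_real mu * of_real g) / (p m - p m'))
        * f (shift_vec hbar mu tau I p))"

definition K_kernel :: "real \<Rightarrow> real \<Rightarrow> real \<Rightarrow> nat \<Rightarrow> nat \<Rightarrow>
    (nat \<Rightarrow> complex) \<Rightarrow> (nat \<Rightarrow> complex) \<Rightarrow> complex" where
  "K_kernel hbar mu g N l p q =
     (\<Prod>m\<in>{1..N}. \<Prod>n\<in>{1..N-l}.
        Gamma (\<i> * (p m - q n) / (of_real hbar * of_real mu) - of_real g / (2 * of_real hbar))
      / Gamma (\<i> * (p m - q n) / (of_real hbar * of_real mu) + of_real g / (2 * of_real hbar)))"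

end

theory Submission
  imports Defs "HOL-Complex_Analysis.Complex_Analysis" "HOL-Computational_Algebra.Polynomial"
begin

(*
  With u = i p/(hbar mu), v = i q/(hbar mu) and alpha = g/(2 hbar), the shift p_m -> p_m -+ i hbar mu
  moves u_m by +-1, and Gamma(z + 1) = z Gamma(z) turns the shifted kernel into the unshifted one
  times rational factors.  Summing both sides of the theorem against t^k therefore turns them into
  the kernel times generating sums, and the theorem becomes the rational identity
  (1 + t)^|T| L_a(x; y) = (1 + t)^|S| L_(-a)(y; x), whose t^k-coefficients are the claimed
  binomial convolutions.  That identity is proved by induction on |S| + |T|: as a function of a
  single coordinate y_v, the difference of its two sides is rational, tends to 0 at infinity, and
  has vanishing residues at its only possible poles x_m + a (by the induction hypothesis) and y_n
  (the terms with v and n exchanged cancel); by Liouville's theorem it vanishes.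
*)

section \<open>Generating sums over subsets\<close>

definition shift_ratio :: "complex \<Rightarrow> complex \<Rightarrow> complex" where
  "shift_ratio \<beta> z = (z + \<beta>) / z"

definition subset_coeff :: "complex \<Rightarrow> (nat \<Rightarrow> complex) \<Rightarrow> nat set \<Rightarrow> nat set \<Rightarrow> complex" where
  "subset_coeff \<beta> u T J = (\<Prod>i\<in>J. \<Prod>j\<in>T - J. shift_ratio \<beta> (u i - u j))"

(* For g' = 1, the coefficient of t^k is the difference operator of degree k (coefficients built
   from shift_ratio beta, coordinates u) applied to a product with factor g j per shifted variable.
   The second weight g' makes the recursion subset_sum_insert close. *)
definition subset_sum ::
    "complex \<Rightarrow> complex \<Rightarrow> (nat \<Rightarrow> complex) \<Rightarrow> (nat \<Rightarrow> complex) \<Rightarrow> (nat \<Rightarrow> complex) \<Rightarrow> nat set \<Rightarrow> complex" where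
  "subset_sum t \<beta> u g g' T =
     (\<Sum>J\<in>Pow T. t ^ card J * subset_coeff \<beta> u T J * (\<Prod>j\<in>J. g j) * (\<Prod>j\<in>T - J. g' j))"

lemma subset_sum_empty [simp]: "subset_sum t \<beta> u g g' {} = 1"
  by (simp add: subset_sum_def subset_coeff_def)

lemma subset_sum_insert:
  assumes "finite T" "v \<notin> T"
  shows "subset_sum t \<beta> u g g' (insert v T) =
           g' v * subset_sum t \<beta> u (\<lambda>j. g j * shift_ratio \<beta> (u j - u v)) g' T
         + t * g v * subset_sum t \<beta> u g (\<lambda>j. g' j * shift_ratio \<beta> (u v - u j)) T"
proof -
  have "Pow T \<inter> insert v ` Pow T = {}" "inj_on (insert v) (Pow T)"
    using assms by (auto simp: inj_on_def)
  then have "subset_sum t \<beta> u g g' (insert v T) =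
       (\<Sum>J\<in>Pow T. t ^ card J * subset_coeff \<beta> u (insert v T) J * prod g J * prod g' (insert v T - J))
     + (\<Sum>J\<in>Pow T. t ^ card (insert v J) * subset_coeff \<beta> u (insert v T) (insert v J)
          * prod g (insert v J) * prod g' (insert v T - insert v J))"
    unfolding subset_sum_def Pow_insert using assms by (simp add: sum.union_disjoint sum.reindex)
  also have "(\<Sum>J\<in>Pow T. t ^ card J * subset_coeff \<beta> u (insert v T) J * prod g J * prod g' (insert v T - J))
      = g' v * subset_sum t \<beta> u (\<lambda>j. g j * shift_ratio \<beta> (u j - u v)) g' T"
    unfolding subset_sum_def sum_distrib_left
  proof (rule sum.cong[OF refl])
    fix J assume "J \<in> Pow T"
    then have e: "insert v T - J = insert v (T - J)" and "finite J" "finite (T - J)" "v \<notin> T - J"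
      using assms finite_subset by auto
    then show "t ^ card J * subset_coeff \<beta> u (insert v T) J * prod g J * prod g' (insert v T - J) =
        g' v * (t ^ card J * subset_coeff \<beta> u T J * (\<Prod>j\<in>J. g j * shift_ratio \<beta> (u j - u v)) * prod g' (T - J))"
      unfolding subset_coeff_def e by (simp add: prod.distrib algebra_simps)
  qed
  also have "(\<Sum>J\<in>Pow T. t ^ card (insert v J) * subset_coeff \<beta> u (insert v T) (insert v J)
          * prod g (insert v J) * prod g' (insert v T - insert v J))
      = t * g v * subset_sum t \<beta> u g (\<lambda>j. g' j * shift_ratio \<beta> (u v - u j)) T"
    unfolding subset_sum_def sum_distrib_left
  proof (rule sum.cong[OF refl])
    fix J assume "J \<in> Pow T"
    then have e: "insert v T - insert v J = T - J" and "finite J" "finite (T - J)" "v \<notin> J"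
      using assms finite_subset by auto
    then show "t ^ card (insert v J) * subset_coeff \<beta> u (insert v T) (insert v J) * prod g (insert v J)
          * prod g' (insert v T - insert v J) =
        t * g v * (t ^ card J * subset_coeff \<beta> u T J * prod g J * (\<Prod>j\<in>T - J. g' j * shift_ratio \<beta> (u v - u j)))"
      unfolding subset_coeff_def e by (simp add: prod.distrib algebra_simps)
  qed
  finally show ?thesis .
qed

lemma subset_sum_remove:
  assumes "finite T" "v \<in> T"
  shows "subset_sum t \<beta> u g g' T =
           g' v * subset_sum t \<beta> u (\<lambda>j. g j * shift_ratio \<beta> (u j - u v)) g' (T - {v})
         + t * g v * subset_sum t \<beta> u g (\<lambda>j. g' j * shift_ratio \<beta> (u v - u j)) (T - {v})"
  using subset_sum_insert[of "T - {v}" v] assms by (simp add: insert_absorb)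

lemma subset_sum_cong:
  assumes "\<And>j. j \<in> T \<Longrightarrow> u j = u' j" "\<And>j. j \<in> T \<Longrightarrow> g j = h j" "\<And>j. j \<in> T \<Longrightarrow> g' j = h' j"
  shows "subset_sum t \<beta> u g g' T = subset_sum t \<beta> u' h h' T"
  unfolding subset_sum_def subset_coeff_def
  by (intro sum.cong refl arg_cong2[where f="(*)"] prod.cong) (use assms in auto)

lemma subset_sum_mult_prod:
  assumes "finite T"
  shows "subset_sum t \<beta> u (\<lambda>i. g i * c i) (\<lambda>i. g' i * c i) T = (\<Prod>i\<in>T. c i) * subset_sum t \<beta> u g g' T"
  unfolding subset_sum_def sum_distrib_left
proof (rule sum.cong[OF refl])
  fix J assume "J \<in> Pow T"
  then have "prod c T = prod c J * prod c (T - J)"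
    using assms prod.subset_diff[of J T c] by (simp add: mult.commute)
  then show "t ^ card J * subset_coeff \<beta> u T J * (\<Prod>j\<in>J. g j * c j) * (\<Prod>j\<in>T - J. g' j * c j) =
      prod c T * (t ^ card J * subset_coeff \<beta> u T J * prod g J * prod g' (T - J))"
    by (simp add: prod.distrib algebra_simps)
qed

lemma tendsto_subset_sum:
  assumes "finite T" "\<And>j. j \<in> T \<Longrightarrow> ((\<lambda>w. G w j) \<longlongrightarrow> g j) F"
    "\<And>j. j \<in> T \<Longrightarrow> ((\<lambda>w. G' w j) \<longlongrightarrow> g' j) F"
  shows "((\<lambda>w. subset_sum t \<beta> u (G w) (G' w) T) \<longlongrightarrow> subset_sum t \<beta> u g g' T) F"
  unfolding subset_sum_def using assms by (intro tendsto_intros) auto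

lemma holomorphic_on_subset_sum:
  assumes "finite T" "\<And>j. j \<in> T \<Longrightarrow> (\<lambda>w. G w j) holomorphic_on A"
    "\<And>j. j \<in> T \<Longrightarrow> (\<lambda>w. G' w j) holomorphic_on A"
  shows "(\<lambda>w. subset_sum t \<beta> u (G w) (G' w) T) holomorphic_on A"
  unfolding subset_sum_def using assms by (intro holomorphic_intros) auto

lemma sum_Pow_by_card:
  fixes t :: "'a::comm_semiring_1"
  assumes "finite T"
  shows "(\<Sum>J\<in>Pow T. t ^ card J * f J) = (\<Sum>k\<le>card T. t ^ k * (\<Sum>J\<in>{J. J \<subseteq> T \<and> card J = k}. f J))"
proof -
  have "(\<Sum>J\<in>Pow T. t ^ card J * f J) = (\<Sum>k\<le>card T. \<Sum>J\<in>{J\<in>Pow T. card J = k}. t ^ card J * f J)"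
    by (rule sum.group[symmetric]) (use assms in \<open>auto intro: card_mono\<close>)
  then show ?thesis by (simp add: sum_distrib_left)
qed

section \<open>Rational factors and a Liouville criterion\<close>

lemma Liouville_removable_poles_0:
  fixes f :: "complex \<Rightarrow> complex"
  assumes "finite P" "f holomorphic_on - P"
    and "\<And>p. p \<in> P \<Longrightarrow> ((\<lambda>w. (w - p) * f w) \<longlongrightarrow> 0) (at p)"
    and "(f \<longlongrightarrow> 0) at_infinity" "z \<notin> P"
  shows "f z = 0"
  using assms
proof (induction P arbitrary: f rule: finite_induct)
  case empty
  then show ?case using Liouville_weak_0[of f] by simp
next
  case (insert p P f)
  have "f holomorphic_on - P - {p}" "p \<in> interior (- P)"
    using insert.prems(1) insert.hyps by (auto simp: Compl_insert interior_open open_Compl finite_imp_closed)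
  then obtain h where h: "h holomorphic_on - P" "\<And>z. z \<in> - P - {p} \<Longrightarrow> h z = f z"
    using holomorphic_on_extend_lim insert.prems(2) by blast
  have ev_eq: "eventually (\<lambda>w. h w = f w) F" if "\<forall>y\<in>insert p P. eventually (\<lambda>w. w \<noteq> y) F" for F
  proof -
    have "eventually (\<lambda>w. \<forall>y\<in>insert p P. w \<noteq> y) F"
      by (rule eventually_ball_finite) (use insert.hyps(1) that in auto)
    then show ?thesis by eventually_elim (use h(2) in auto)
  qed
  have "h z = 0"
  proof (rule insert.IH[OF h(1)])
    fix q assume "q \<in> P"
    show "((\<lambda>w. (w - q) * h w) \<longlongrightarrow> 0) (at q)"
      using insert.prems(2)[of q] \<open>q \<in> P\<close> ev_eq[of "at q"]
      by (auto simp: eventually_neq_at_within intro: Lim_transform_eventually elim!: eventually_mono)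
  next
    show "(h \<longlongrightarrow> 0) at_infinity"
      using insert.prems(3) ev_eq[of at_infinity]
      by (auto simp: eventually_not_equal_at_infinity intro: Lim_transform_eventually elim!: eventually_mono)
  qed (use insert.prems(4) in simp)
  then show ?case using h(2)[of z] insert.prems(4) by simp
qed

lemma tendsto_mult_at_simple_pole:
  fixes f A B :: "complex \<Rightarrow> complex"
  assumes "eventually (\<lambda>w. f w = A w + B w / (w - p)) (at p)"
    and "(A \<longlongrightarrow> \<alpha>) (at p)" and "(B \<longlongrightarrow> 0) (at p)"
  shows "((\<lambda>w. (w - p) * f w) \<longlongrightarrow> 0) (at p)"
proof -
  have "((\<lambda>w. (w - p) * A w + B w) \<longlongrightarrow> (p - p) * \<alpha> + 0) (at p)"
    using assms(2,3) by (intro tendsto_intros) auto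
  moreover have "eventually (\<lambda>w. (w - p) * A w + B w = (w - p) * f w) (at p)"
    using assms(1) eventually_neq_at_within[of p p UNIV]
    by eventually_elim (simp add: distrib_left)
  ultimately show ?thesis by (auto intro: Lim_transform_eventually)
qed

lemma filterlim_diff_const_at_infinity:
  fixes c :: "'a::real_normed_vector"
  shows "filterlim (\<lambda>w. w - c) at_infinity at_infinity" "filterlim (\<lambda>w. c - w) at_infinity at_infinity"
proof -
  show *: "filterlim (\<lambda>w. w - c) at_infinity at_infinity"
    using tendsto_add_filterlim_at_infinity'[OF filterlim_ident tendsto_const, of "- c"] by simp
  then show "filterlim (\<lambda>w. c - w) at_infinity at_infinity"
    by (simp add: filterlim_at_infinity_conv_norm_at_top norm_minus_commute)
qed

lemma holomorphic_on_shift_ratio [holomorphic_intros]: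
  "f holomorphic_on A \<Longrightarrow> (\<And>w. w \<in> A \<Longrightarrow> f w \<noteq> 0) \<Longrightarrow> (\<lambda>w. shift_ratio \<beta> (f w)) holomorphic_on A"
  unfolding shift_ratio_def by (intro holomorphic_intros) auto

lemma tendsto_shift_ratio [tendsto_intros]:
  "(f \<longlongrightarrow> z) F \<Longrightarrow> z \<noteq> 0 \<Longrightarrow> ((\<lambda>w. shift_ratio \<beta> (f w)) \<longlongrightarrow> shift_ratio \<beta> z) F"
  unfolding shift_ratio_def by (intro tendsto_intros)

lemma tendsto_shift_ratio_at_infinity:
  assumes "filterlim f at_infinity F"
  shows "((\<lambda>w. shift_ratio \<beta> (f w)) \<longlongrightarrow> 1) F"
proof -
  have "((\<lambda>w. 1 + \<beta> / f w) \<longlongrightarrow> 1 + 0) F"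
    by (intro tendsto_add tendsto_const tendsto_divide_0[OF tendsto_const assms])
  moreover have "eventually (\<lambda>w. 1 + \<beta> / f w = shift_ratio \<beta> (f w)) F"
    using filterlim_at_infinity_imp_eventually_ne[OF assms, of 0]
    by eventually_elim (simp add: shift_ratio_def add_divide_distrib)
  ultimately show ?thesis by (auto intro: Lim_transform_eventually)
qed

definition kernel_ratio :: "complex \<Rightarrow> complex \<Rightarrow> complex \<Rightarrow> complex" where
  "kernel_ratio a z w = (z - w - a) / (z - w + a)"

lemma kernel_ratio_eq_shift_ratio: "kernel_ratio a z w = shift_ratio (- (2 * a)) (z - w + a)"
  unfolding kernel_ratio_def shift_ratio_def by (simp add: algebra_simps)

lemma kernel_ratio_swap: "kernel_ratio (- a) w z = kernel_ratio a z w"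
  unfolding kernel_ratio_def by (rule minus_divide_divide[symmetric, THEN trans]) (simp add: algebra_simps)

lemma holomorphic_on_kernel_ratio [holomorphic_intros]:
  "f holomorphic_on A \<Longrightarrow> h holomorphic_on A \<Longrightarrow> (\<And>w. w \<in> A \<Longrightarrow> f w - h w + a \<noteq> 0)
    \<Longrightarrow> (\<lambda>w. kernel_ratio a (f w) (h w)) holomorphic_on A"
  unfolding kernel_ratio_eq_shift_ratio by (intro holomorphic_intros) auto

lemma tendsto_kernel_ratio [tendsto_intros]:
  "(f \<longlongrightarrow> z) F \<Longrightarrow> (h \<longlongrightarrow> w) F \<Longrightarrow> z - w + a \<noteq> 0
    \<Longrightarrow> ((\<lambda>u. kernel_ratio a (f u) (h u)) \<longlongrightarrow> kernel_ratio a z w) F"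
  unfolding kernel_ratio_eq_shift_ratio by (intro tendsto_intros)

lemma tendsto_kernel_ratio_at_infinity: "((\<lambda>w. kernel_ratio a z w) \<longlongrightarrow> 1) at_infinity"
  unfolding kernel_ratio_eq_shift_ratio
  using filterlim_diff_const_at_infinity(2)[of "z + a"]
  by (intro tendsto_shift_ratio_at_infinity) (simp add: algebra_simps)

section \<open>The kernel identity\<close>

definition kernel_sum ::
    "complex \<Rightarrow> complex \<Rightarrow> (nat \<Rightarrow> complex) \<Rightarrow> nat set \<Rightarrow> (nat \<Rightarrow> complex) \<Rightarrow> nat set \<Rightarrow> complex" where
  "kernel_sum t a x S y T = subset_sum t (2 * a) x (\<lambda>i. \<Prod>n\<in>T. kernel_ratio a (x i) (y n)) (\<lambda>_. 1) S"

(* Generating-function form of the kernel function identity: after the Gamma factors are cleared,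
   the coefficient of t^k is the theorem. *)
definition kernel_identity ::
    "complex \<Rightarrow> complex \<Rightarrow> (nat \<Rightarrow> complex) \<Rightarrow> nat set \<Rightarrow> (nat \<Rightarrow> complex) \<Rightarrow> nat set \<Rightarrow> bool" where
  "kernel_identity t a x S y T \<longleftrightarrow>
     (1 + t) ^ card T * kernel_sum t a x S y T = (1 + t) ^ card S * kernel_sum t (- a) y T x S"

definition admissible :: "complex \<Rightarrow> (nat \<Rightarrow> complex) \<Rightarrow> nat set \<Rightarrow> (nat \<Rightarrow> complex) \<Rightarrow> nat set \<Rightarrow> bool" where
  "admissible a x S y T \<longleftrightarrow> finite S \<and> finite T \<and> inj_on x S \<and> inj_on y T \<and>
     (\<forall>m\<in>S. \<forall>n\<in>T. x m - y n + a \<noteq> 0 \<and> x m - y n - a \<noteq> 0)"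

lemma kernel_sum_neg:
  "kernel_sum t (- a) y T x S = subset_sum t (- (2 * a)) y (\<lambda>n. \<Prod>m\<in>S. kernel_ratio a (x m) (y n)) (\<lambda>_. 1) T"
  unfolding kernel_sum_def kernel_ratio_swap by simp

lemma kernel_identity_swap: "kernel_identity t (- a) y T x S \<Longrightarrow> kernel_identity t a x S y T"
  unfolding kernel_identity_def by simp

lemma admissible_swap: "admissible a x S y T \<Longrightarrow> admissible (- a) y T x S"
  unfolding admissible_def by (fastforce simp: algebra_simps)

lemma admissible_subset: "admissible a x S y T \<Longrightarrow> S' \<subseteq> S \<Longrightarrow> T' \<subseteq> T \<Longrightarrow> admissible a x S' y T'"
  unfolding admissible_def by (auto intro: finite_subset inj_on_subset)

locale kernel_identity_step =
  fixes t a :: complex and x y :: "nat \<Rightarrow> complex" and S T :: "nat set" and v :: nat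
  assumes admissible: "admissible a x S y T" and v_in_T: "v \<in> T"
    and smaller_identity: "\<And>S'. S' \<subseteq> S \<Longrightarrow> kernel_identity t a x S' y (T - {v})"
begin

abbreviation "T0 \<equiv> T - {v}"

lemma finite_S: "finite S" and finite_T: "finite T" and finite_T0: "finite T0"
  using admissible by (auto simp: admissible_def)

lemma card_T: "card T = Suc (card T0)"
  using admissible v_in_T card_Suc_Diff1 unfolding admissible_def by metis

lemma points_distinct:
  "m \<in> S \<Longrightarrow> n \<in> T \<Longrightarrow> x m - y n + a \<noteq> 0"
  "m \<in> S \<Longrightarrow> m' \<in> S \<Longrightarrow> m \<noteq> m' \<Longrightarrow> x m \<noteq> x m'"
  "n \<in> T \<Longrightarrow> n' \<in> T \<Longrightarrow> n \<noteq> n' \<Longrightarrow> y n \<noteq> y n'"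
  using admissible unfolding admissible_def inj_on_def by blast+

definition left_weight :: "nat \<Rightarrow> complex" where
  "left_weight i = (\<Prod>n\<in>T0. kernel_ratio a (x i) (y n))"

definition right_weight :: "complex \<Rightarrow> complex" where
  "right_weight w = (\<Prod>m\<in>S. kernel_ratio a (x m) w)"

definition left_sum :: "complex \<Rightarrow> complex" where
  "left_sum w = subset_sum t (2 * a) x (\<lambda>i. left_weight i * kernel_ratio a (x i) w) (\<lambda>_. 1) S"

definition right_sum_without :: "complex \<Rightarrow> complex" where
  "right_sum_without w =
     subset_sum t (- (2 * a)) y (\<lambda>j. right_weight (y j) * shift_ratio (- (2 * a)) (y j - w)) (\<lambda>_. 1) T0"

definition right_sum_with :: "complex \<Rightarrow> complex" where
  "right_sum_with w =
     subset_sum t (- (2 * a)) y (\<lambda>j. right_weight (y j)) (\<lambda>j. shift_ratio (- (2 * a)) (w - y j)) T0"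

definition defect :: "complex \<Rightarrow> complex" where
  "defect w = (1 + t) ^ card T * kernel_sum t a x S (y(v := w)) T
            - (1 + t) ^ card S * kernel_sum t (- a) (y(v := w)) T x S"

lemma defect_split:
  "defect w = (1 + t) ^ card T * left_sum w
     - (1 + t) ^ card S * (right_sum_without w + t * right_weight w * right_sum_with w)"
proof -
  have "kernel_sum t a x S (y(v := w)) T = left_sum w"
    unfolding kernel_sum_def left_sum_def left_weight_def
    by (intro subset_sum_cong) (simp_all add: prod.remove[OF finite_T v_in_T] mult.commute)
  moreover have "kernel_sum t (- a) (y(v := w)) T x S = right_sum_without w + t * right_weight w * right_sum_with w"
    unfolding kernel_sum_neg subset_sum_remove[OF finite_T v_in_T]
      right_sum_without_def right_sum_with_def right_weight_def
    by (simp only: mult_1, intro arg_cong2[where f = "(+)"] arg_cong2[where f = "(*)"] refl subset_sum_cong) auto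
  ultimately show ?thesis unfolding defect_def by simp
qed

definition poles :: "complex set" where
  "poles = (\<lambda>m. x m + a) ` S \<union> y ` T0"

lemma finite_poles: "finite poles"
  unfolding poles_def using finite_S finite_T0 by simp

lemma holomorphic_defect: "defect holomorphic_on - poles"
proof -
  have "x i - w + a \<noteq> 0" if "w \<notin> poles" "i \<in> S" for w i
    using that unfolding poles_def by (auto simp: algebra_simps)
  moreover have "w - y j \<noteq> 0" "y j - w \<noteq> 0" if "w \<notin> poles" "j \<in> T0" for w j
    using that unfolding poles_def by auto
  ultimately show ?thesis
    unfolding defect_split[abs_def] left_sum_def right_sum_without_def right_sum_with_def right_weight_def
    by (auto intro!: holomorphic_intros holomorphic_on_subset_sum finite_S finite_T0)
qed

lemma defect_tendsto_at_infinity: "(defect \<longlongrightarrow> 0) at_infinity"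
proof -
  define K where "K = kernel_sum t a x S y T0"
  define K' where "K' = kernel_sum t (- a) y T0 x S"
  have sr: "((\<lambda>w. shift_ratio \<beta> (w - c)) \<longlongrightarrow> 1) at_infinity" "((\<lambda>w. shift_ratio \<beta> (c - w)) \<longlongrightarrow> 1) at_infinity"
    for \<beta> c :: complex
    by (simp_all add: tendsto_shift_ratio_at_infinity filterlim_diff_const_at_infinity)
  have "(left_sum \<longlongrightarrow> subset_sum t (2 * a) x (\<lambda>i. left_weight i * 1) (\<lambda>_. 1) S) at_infinity"
    unfolding left_sum_def[abs_def]
    by (intro tendsto_subset_sum finite_S tendsto_intros tendsto_kernel_ratio_at_infinity)
  then have "(left_sum \<longlongrightarrow> K) at_infinity"
    by (simp add: K_def kernel_sum_def left_weight_def)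
  moreover have "(right_sum_without \<longlongrightarrow> subset_sum t (- (2 * a)) y (\<lambda>j. right_weight (y j) * 1) (\<lambda>_. 1) T0) at_infinity"
    unfolding right_sum_without_def[abs_def] by (intro tendsto_subset_sum finite_T0 tendsto_intros sr)
  then have "(right_sum_without \<longlongrightarrow> K') at_infinity"
    by (simp add: K'_def kernel_sum_neg right_weight_def)
  moreover have "(right_sum_with \<longlongrightarrow> subset_sum t (- (2 * a)) y (\<lambda>j. right_weight (y j)) (\<lambda>_. 1) T0) at_infinity"
    unfolding right_sum_with_def[abs_def] by (intro tendsto_subset_sum finite_T0 tendsto_intros sr)
  then have "(right_sum_with \<longlongrightarrow> K') at_infinity"
    by (simp add: K'_def kernel_sum_neg right_weight_def)
  moreover have "(right_weight \<longlongrightarrow> (\<Prod>m\<in>S. 1)) at_infinity"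
    unfolding right_weight_def[abs_def] by (intro tendsto_prod tendsto_kernel_ratio_at_infinity)
  ultimately have "(defect \<longlongrightarrow> (1 + t) ^ card T * K - (1 + t) ^ card S * (K' + t * 1 * K')) at_infinity"
    unfolding defect_split[abs_def] by (intro tendsto_intros) auto
  also have "(1 + t) ^ card T * K - (1 + t) ^ card S * (K' + t * 1 * K')
      = (1 + t) * ((1 + t) ^ card T0 * K - (1 + t) ^ card S * K')"
    by (simp add: card_T algebra_simps)
  also have "\<dots> = 0"
    using smaller_identity[of S] by (simp add: kernel_identity_def K_def K'_def)
  finally show ?thesis .
qed

lemma kernel_ratio_at_pole: "kernel_ratio a z w = (w - z + a) / (w - (z + a))"
  unfolding kernel_ratio_def by (rule minus_divide_divide[symmetric, THEN trans]) (simp add: algebra_simps)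

(* The residue of defect at x m + a is t (2 a) times the difference of the two sides below, and
   that difference is a multiple of the kernel identity for S - {m} and T0. *)
lemma left_residue_cancels:
  assumes "m \<in> S"
  shows "(1 + t) ^ card T * left_weight m * subset_sum t (2 * a) x
           (\<lambda>i. left_weight i * kernel_ratio a (x i) (x m + a)) (\<lambda>i. shift_ratio (2 * a) (x m - x i)) (S - {m})
       = (1 + t) ^ card S * (\<Prod>i\<in>S - {m}. kernel_ratio a (x i) (x m + a)) * right_sum_with (x m + a)"
    (is "?lhs = ?rhs")
proof -
  let ?P = "\<Prod>i\<in>S - {m}. kernel_ratio a (x i) (x m + a)"
  let ?K = "kernel_sum t a x (S - {m}) y T0" and ?K' = "kernel_sum t (- a) y T0 x (S - {m})"
  have "shift_ratio (2 * a) (x m - x i) = kernel_ratio a (x i) (x m + a)" for i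
    unfolding kernel_ratio_def shift_ratio_def by (rule minus_divide_divide[symmetric, THEN trans]) simp
  then have L: "subset_sum t (2 * a) x (\<lambda>i. left_weight i * kernel_ratio a (x i) (x m + a))
      (\<lambda>i. shift_ratio (2 * a) (x m - x i)) (S - {m}) = ?P * ?K"
    using subset_sum_mult_prod[where T = "S - {m}" and c = "\<lambda>i. kernel_ratio a (x i) (x m + a)"
        and g' = "\<lambda>_. 1"] finite_S
    unfolding kernel_sum_def left_weight_def by simp
  have "shift_ratio (- (2 * a)) (x m + a - y j) = kernel_ratio a (x m) (y j)" for j
    unfolding kernel_ratio_eq_shift_ratio by (simp add: algebra_simps)
  moreover have "right_weight (y j) = (\<Prod>i\<in>S - {m}. kernel_ratio a (x i) (y j)) * kernel_ratio a (x m) (y j)" for j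
    unfolding right_weight_def prod.remove[OF finite_S assms] by simp
  ultimately have R: "right_sum_with (x m + a) = left_weight m * ?K'"
    unfolding right_sum_with_def kernel_sum_neg left_weight_def
      subset_sum_mult_prod[OF finite_T0, symmetric] by simp
  have "?lhs = (1 + t) * left_weight m * ?P * ((1 + t) ^ card T0 * ?K)"
    unfolding L card_T by (simp add: algebra_simps)
  also have "\<dots> = (1 + t) * left_weight m * ?P * ((1 + t) ^ card (S - {m}) * ?K')"
    using smaller_identity[of "S - {m}"] by (simp add: kernel_identity_def)
  also have "\<dots> = ?rhs"
  proof -
    have "card S = Suc (card (S - {m}))"
      using finite_S assms card_Suc_Diff1 by metis
    then show ?thesis
      unfolding R by (simp only: power_Suc) (simp add: algebra_simps)
  qed
  finally show ?thesis .
qed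

lemma defect_residue_left:
  assumes "m \<in> S"
  defines "p \<equiv> x m + a"
  shows "((\<lambda>w. (w - p) * defect w) \<longlongrightarrow> 0) (at p)"
proof -
  define S0 where "S0 = S - {m}"
  define L1 where "L1 w = subset_sum t (2 * a) x
      (\<lambda>i. left_weight i * kernel_ratio a (x i) w * shift_ratio (2 * a) (x i - x m)) (\<lambda>_. 1) S0" for w
  define L2 where "L2 w = subset_sum t (2 * a) x
      (\<lambda>i. left_weight i * kernel_ratio a (x i) w) (\<lambda>i. shift_ratio (2 * a) (x m - x i)) S0" for w
  define W where "W w = (\<Prod>i\<in>S0. kernel_ratio a (x i) w)" for w
  define A where "A w = (1 + t) ^ card T * L1 w - (1 + t) ^ card S * right_sum_without w" for w
  define C where "C w = t * ((1 + t) ^ card T * left_weight m * L2 w - (1 + t) ^ card S * W w * right_sum_with w)"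
    for w
  define B where "B w = (w - x m + a) * C w" for w
  have fin: "finite S0" using finite_S by (simp add: S0_def)
  have xi: "x i - p + a \<noteq> 0" if "i \<in> S0" for i
    using that points_distinct(2)[of i m] assms(1) by (auto simp: p_def S0_def)
  have yj: "y j - p \<noteq> 0" "p - y j \<noteq> 0" "p \<noteq> y j" if "j \<in> T" for j
    using that points_distinct(1)[OF assms(1), of j] by (auto simp: p_def algebra_simps)
  have "left_sum w = L1 w + t * (left_weight m * kernel_ratio a (x m) w) * L2 w" for w
    unfolding left_sum_def L1_def L2_def S0_def subset_sum_remove[OF finite_S assms(1)] by simp
  moreover have "right_weight w = kernel_ratio a (x m) w * W w" for w
    unfolding right_weight_def W_def S0_def prod.remove[OF finite_S assms(1)] ..
  ultimately have "defect w = A w + kernel_ratio a (x m) w * C w" for w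
    unfolding defect_split A_def C_def by (simp add: algebra_simps)
  then have "eventually (\<lambda>w. defect w = A w + B w / (w - p)) (at p)"
    by (simp add: B_def kernel_ratio_at_pole p_def)
  moreover have "(A \<longlongrightarrow> A p) (at p)"
    unfolding A_def[abs_def] L1_def right_sum_without_def
    by (intro tendsto_intros tendsto_subset_sum fin finite_T0) (auto intro!: tendsto_intros xi yj dest: yj(3))
  moreover have "(B \<longlongrightarrow> B p) (at p)"
    unfolding B_def[abs_def] C_def L2_def W_def right_sum_with_def
    by (intro tendsto_intros tendsto_subset_sum fin finite_T0) (auto intro!: tendsto_intros xi yj dest: yj(3))
  moreover have "B p = 0"
    using left_residue_cancels[OF assms(1)] unfolding B_def C_def L2_def W_def S0_def p_def by simp
  ultimately show ?thesis
    by (intro tendsto_mult_at_simple_pole[of defect A B p "A p"]) auto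
qed

lemma defect_residue_right:
  assumes "n \<in> T0"
  defines "p \<equiv> y n"
  shows "((\<lambda>w. (w - p) * defect w) \<longlongrightarrow> 0) (at p)"
proof -
  define T1 where "T1 = T0 - {n}"
  define R1a where "R1a w = subset_sum t (- (2 * a)) y (\<lambda>j. right_weight (y j)
      * shift_ratio (- (2 * a)) (y j - w) * shift_ratio (- (2 * a)) (y j - y n)) (\<lambda>_. 1) T1" for w
  define R1b where "R1b w = subset_sum t (- (2 * a)) y (\<lambda>j. right_weight (y j)
      * shift_ratio (- (2 * a)) (y j - w)) (\<lambda>j. shift_ratio (- (2 * a)) (y n - y j)) T1" for w
  define R2a where "R2a w = subset_sum t (- (2 * a)) y (\<lambda>j. right_weight (y j)
      * shift_ratio (- (2 * a)) (y j - y n)) (\<lambda>j. shift_ratio (- (2 * a)) (w - y j)) T1" for w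
  define R2b where "R2b w = subset_sum t (- (2 * a)) y (\<lambda>j. right_weight (y j))
      (\<lambda>j. shift_ratio (- (2 * a)) (w - y j) * shift_ratio (- (2 * a)) (y n - y j)) T1" for w
  define A where "A w = (1 + t) ^ card T * left_sum w
      - (1 + t) ^ card S * (R1a w + t ^ 2 * right_weight w * right_weight (y n) * R2b w)" for w
  define B where "B w = - ((1 + t) ^ card S * t * (right_weight (y n) * (w - p + 2 * a) * R1b w
      + right_weight w * (w - p - 2 * a) * R2a w))" for w
  have fin: "finite T1" using finite_T0 by (simp add: T1_def)
  have xi: "x i - p + a \<noteq> 0" if "i \<in> S" for i
    using that points_distinct(1)[of i n] assms(1) by (simp add: p_def)
  have yj: "y j - p \<noteq> 0" "p - y j \<noteq> 0" "p \<noteq> y j" if "j \<in> T1" for j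
    using that points_distinct(3)[of j n] assms(1) by (auto simp: p_def T1_def)
  have "right_sum_without w = R1a w + t * (right_weight (y n) * shift_ratio (- (2 * a)) (y n - w)) * R1b w"
    "right_sum_with w = shift_ratio (- (2 * a)) (w - y n) * R2a w + t * right_weight (y n) * R2b w" for w
    unfolding right_sum_without_def right_sum_with_def R1a_def R1b_def R2a_def R2b_def T1_def
      subset_sum_remove[OF finite_T0 assms(1)] by simp_all
  then have split: "defect w = A w - (1 + t) ^ card S * t * (right_weight (y n)
      * shift_ratio (- (2 * a)) (y n - w) * R1b w + right_weight w * shift_ratio (- (2 * a)) (w - y n) * R2a w)"
    for w unfolding defect_split A_def by (simp add: algebra_simps power2_eq_square)
  have sr: "shift_ratio (- (2 * a)) (y n - w) = (w - p + 2 * a) / (w - p)"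
    "shift_ratio (- (2 * a)) (w - y n) = (w - p - 2 * a) / (w - p)" for w
    unfolding shift_ratio_def p_def by (rule minus_divide_divide[symmetric, THEN trans]; simp)+
  have "defect w = A w + B w / (w - p)" if "w \<noteq> p" for w
    using that unfolding split sr B_def by (simp add: divide_simps)
  then have "eventually (\<lambda>w. defect w = A w + B w / (w - p)) (at p)"
    using eventually_neq_at_within[of p p UNIV] by (auto elim: eventually_mono)
  moreover have "(A \<longlongrightarrow> A p) (at p)"
    unfolding A_def[abs_def] left_sum_def R1a_def R2b_def right_weight_def
    by (intro tendsto_intros tendsto_subset_sum fin finite_S) (auto intro!: tendsto_intros xi yj dest: yj(3))
  moreover have "(B \<longlongrightarrow> B p) (at p)"
    unfolding B_def[abs_def] R1b_def R2a_def right_weight_def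
    by (intro tendsto_intros tendsto_subset_sum fin) (auto intro!: tendsto_intros xi yj dest: yj(3))
  moreover have "B p = 0" \<comment> \<open>at w = y n the functions R1b and R2a coincide\<close>
    unfolding B_def R1b_def R2a_def p_def by (simp add: algebra_simps)
  ultimately show ?thesis
    by (intro tendsto_mult_at_simple_pole[of defect A B p "A p"]) auto
qed

lemma kernel_identity_holds: "kernel_identity t a x S y T"
proof -
  have "y v \<noteq> x m + a" if "m \<in> S" for m
    using points_distinct(1)[OF that v_in_T] by auto
  moreover have "y v \<noteq> y n" if "n \<in> T0" for n
    using points_distinct(3)[OF v_in_T, of n] that by auto
  ultimately have "y v \<notin> poles"
    unfolding poles_def by auto
  moreover have "((\<lambda>w. (w - p) * defect w) \<longlongrightarrow> 0) (at p)" if "p \<in> poles" for p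
  proof -
    from that consider m where "m \<in> S" "p = x m + a" | n where "n \<in> T0" "p = y n"
      unfolding poles_def by blast
    then show ?thesis
      by cases (simp_all add: defect_residue_left defect_residue_right)
  qed
  ultimately have "defect (y v) = 0"
    by (intro Liouville_removable_poles_0[OF finite_poles holomorphic_defect _
          defect_tendsto_at_infinity])
  then show ?thesis
    unfolding defect_def kernel_identity_def by simp
qed

end

theorem kernel_identity_if_admissible: "admissible a x S y T \<Longrightarrow> kernel_identity t a x S y T"
proof (induction "card S + card T" arbitrary: a x S y T rule: less_induct)
  case less
  have fin: "finite S" "finite T"
    using less.prems by (auto simp: admissible_def)
  consider v where "v \<in> T" | v where "T = {}" "v \<in> S" | "S = {}" "T = {}"
    by blast
  then show ?case
  proof cases
    case (1 v)
    have "kernel_identity t a x S' y (T - {v})" if "S' \<subseteq> S" for S'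
    proof (rule less.hyps)
      show "card S' + card (T - {v}) < card S + card T"
        using card_mono[OF fin(1) that] card_Diff1_less[OF fin(2) 1] by linarith
      show "admissible a x S' y (T - {v})"
        using admissible_subset[OF less.prems that Diff_subset] .
    qed
    then show ?thesis
      using kernel_identity_step.kernel_identity_holds[OF kernel_identity_step.intro[OF less.prems 1]] by blast
  next
    case (2 v)
    have "kernel_identity t (- a) y T' x (S - {v})" if "T' \<subseteq> T" for T'
    proof (rule kernel_identity_swap, rule less.hyps)
      show "card (S - {v}) + card T' < card S + card T"
        using card_mono[OF fin(2) that] card_Diff1_less[OF fin(1) 2(2)] by linarith
      show "admissible (- (- a)) x (S - {v}) y T'"
        using admissible_subset[OF less.prems Diff_subset that] by simp
    qed
    then have "kernel_identity t (- a) y T x S"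
      using kernel_identity_step.kernel_identity_holds[OF kernel_identity_step.intro[OF
          admissible_swap[OF less.prems] 2(2)]] by blast
    then show ?thesis
      by (rule kernel_identity_swap)
  next
    case 3
    then show ?thesis
      by (simp add: kernel_identity_def kernel_sum_def)
  qed
qed

section \<open>The Gamma kernel and the difference operators\<close>

definition gamma_ratio :: "complex \<Rightarrow> complex \<Rightarrow> complex" where
  "gamma_ratio \<alpha> z = Gamma (z - \<alpha>) / Gamma (z + \<alpha>)"

lemma gamma_ratio_shift:
  assumes "z + \<alpha> \<notin> \<int>" "z - \<alpha> \<notin> \<int>"
  shows "gamma_ratio \<alpha> (z + sgnc tau) = gamma_ratio \<alpha> z * kernel_ratio (sgnc tau * \<alpha>) (z + (sgnc tau - 1) / 2) 0"
proof (cases tau)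
  case True
  have "Gamma (z + 1 - \<alpha>) = (z - \<alpha>) * Gamma (z - \<alpha>)" "Gamma (z + 1 + \<alpha>) = (z + \<alpha>) * Gamma (z + \<alpha>)"
    using Gamma_plus1[of "z - \<alpha>"] Gamma_plus1[of "z + \<alpha>"] assms by (auto simp: algebra_simps)
  then show ?thesis
    using True by (simp add: sgnc_def gamma_ratio_def kernel_ratio_def mult.commute)
next
  case False
  have "z - 1 + \<alpha> \<notin> \<int>" "z - 1 - \<alpha> \<notin> \<int>"
    using assms Ints_add[OF _ Ints_1, of "z - 1 + \<alpha>"] Ints_add[OF _ Ints_1, of "z - 1 - \<alpha>"]
    by (auto simp: algebra_simps)
  then have "z - 1 - \<alpha> \<notin> \<int>\<^sub>\<le>\<^sub>0" "z - 1 + \<alpha> \<notin> \<int>\<^sub>\<le>\<^sub>0" "z - 1 - \<alpha> \<noteq> 0" "z - 1 + \<alpha> \<noteq> 0"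
    by auto
  then have "Gamma (z - \<alpha>) = (z - 1 - \<alpha>) * Gamma (z - 1 - \<alpha>)"
    "Gamma (z + \<alpha>) = (z - 1 + \<alpha>) * Gamma (z - 1 + \<alpha>)"
    using Gamma_plus1[of "z - 1 - \<alpha>"] Gamma_plus1[of "z - 1 + \<alpha>"] by simp_all
  moreover have "(c * A) / (d * B) * (d / c) = A / B" if "c \<noteq> 0" "d \<noteq> 0" for c d A B :: complex
    using that by (simp add: field_simps)
  ultimately have "gamma_ratio \<alpha> (z - 1) = gamma_ratio \<alpha> z * ((z - 1 + \<alpha>) / (z - 1 - \<alpha>))"
    using \<open>z - 1 - \<alpha> \<noteq> 0\<close> \<open>z - 1 + \<alpha> \<noteq> 0\<close> unfolding gamma_ratio_def by simp
  then show ?thesis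
    using False by (simp add: sgnc_def kernel_ratio_def)
qed

lemma prod_gamma_ratio_shift:
  assumes "finite S" "finite T"
    and "\<And>m n. m \<in> S \<Longrightarrow> n \<in> T \<Longrightarrow> D m n + \<alpha> \<notin> \<int>" "\<And>m n. m \<in> S \<Longrightarrow> n \<in> T \<Longrightarrow> D m n - \<alpha> \<notin> \<int>"
  shows "(\<Prod>m\<in>S. \<Prod>n\<in>T. gamma_ratio \<alpha> (D m n + (if P m n then sgnc tau else 0)))
       = (\<Prod>m\<in>S. \<Prod>n\<in>T. gamma_ratio \<alpha> (D m n))
       * (\<Prod>m\<in>S. \<Prod>n\<in>T. if P m n then kernel_ratio (sgnc tau * \<alpha>) (D m n + (sgnc tau - 1) / 2) 0 else 1)"
  unfolding prod.distrib[symmetric] using assms by (intro prod.cong refl) (simp add: gamma_ratio_shift)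

lemma prod_if_restrict_left:
  assumes "finite S" "I \<subseteq> S"
  shows "(\<Prod>m\<in>S. \<Prod>n\<in>T. if m \<in> I then f m n else 1) = (\<Prod>m\<in>I. \<Prod>n\<in>T. f m n)"
proof -
  have "(\<Prod>m\<in>S. \<Prod>n\<in>T. if m \<in> I then f m n else 1) = (\<Prod>m\<in>S. if m \<in> I then \<Prod>n\<in>T. f m n else 1)"
    by (intro prod.cong) auto
  also have "\<dots> = (\<Prod>m\<in>I. \<Prod>n\<in>T. f m n)"
    by (simp add: prod.inter_restrict[OF assms(1), symmetric] Int_absorb1[OF assms(2)])
  finally show ?thesis .
qed

lemma prod_if_restrict_right:
  assumes "finite T" "J \<subseteq> T"
  shows "(\<Prod>m\<in>S. \<Prod>n\<in>T. if n \<in> J then f m n else 1) = (\<Prod>n\<in>J. \<Prod>m\<in>S. f m n)"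
  using prod.swap[where g = "\<lambda>m n. if n \<in> J then f m n else 1" and A = S and B = T]
    prod_if_restrict_left[OF assms] by simp

lemma coeff_eq_binomial_convolution:
  fixes cL cR :: "nat \<Rightarrow> complex"
  assumes "\<And>t. (1 + t) ^ M * (\<Sum>k\<le>n1. t ^ k * cL k) = (1 + t) ^ (M + l) * (\<Sum>k\<le>n2. t ^ k * cR k)"
    and "\<And>k. n1 < k \<Longrightarrow> cL k = 0" and "\<And>k. n2 < k \<Longrightarrow> cR k = 0"
  shows "cL k = (\<Sum>j\<le>k. of_nat (l choose j) * cR (k - j))"
proof -
  define PL where "PL = (\<Sum>k\<le>n1. monom (cL k) k)"
  define PR where "PR = (\<Sum>k\<le>n2. monom (cR k) k)"
  have "poly ([:1, 1:] ^ M * PL) = poly ([:1, 1:] ^ M * ([:1, 1:] ^ l * PR))"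
    using assms(1) by (simp add: PL_def PR_def poly_sum poly_monom power_add algebra_simps fun_eq_iff)
  then have "[:1, 1:] ^ M * PL = [:1, 1:] ^ M * ([:1, 1:] ^ l * PR)"
    by (simp only: poly_eq_poly_eq_iff)
  then have PL: "PL = [:1, 1:] ^ l * PR"
    by simp
  have coeff: "coeff (\<Sum>k\<le>n. monom (c k) k) i = c i" if "\<And>k. n < k \<Longrightarrow> c k = 0" for c :: "nat \<Rightarrow> complex" and n i
    using that by (auto simp: coeff_sum coeff_monom)
  have "coeff ([:1, 1:] ^ l) j = (of_nat (l choose j) :: complex)" for j
    by (cases "j \<le> l") (simp_all add: coeff_linear_poly_power coeff_eq_0 degree_power_eq)
  then show ?thesis
    using coeff[of n1 cL k] assms(2,3) unfolding PL_def[symmetric] PL coeff_mult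
    by (simp add: PR_def coeff)
qed

lemma A_nr_eq_0: "n < k \<Longrightarrow> A_nr hbar mu g tau n k f p = 0"
  unfolding A_nr_def by (rule sum.neutral) (auto dest: card_mono[OF finite_atLeastAtMost])

lemma A_nr_generating:
  "(\<Sum>k\<le>n. t ^ k * A_nr hbar mu g tau n k f p) = (\<Sum>I\<in>Pow {1..n}. t ^ card I *
     ((\<Prod>m\<in>I. \<Prod>m'\<in>{1..n} - I. (p m - p m' - sgnc tau * \<i> * of_real mu * of_real g) / (p m - p m'))
       * f (shift_vec hbar mu tau I p)))"
  using sum_Pow_by_card[of "{1..n}" t] by (simp add: A_nr_def)

definition rescale :: "real \<Rightarrow> real \<Rightarrow> complex \<Rightarrow> complex" where
  "rescale hbar mu z = \<i> * z / (of_real hbar * of_real mu)"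

lemma rescale_diff: "\<i> * (P - Q) / (of_real hbar * of_real mu) = rescale hbar mu P - rescale hbar mu Q"
  by (simp add: rescale_def diff_divide_distrib right_diff_distrib)

lemma rescale_eq_iff: "hbar \<noteq> 0 \<Longrightarrow> mu \<noteq> 0 \<Longrightarrow> rescale hbar mu P = rescale hbar mu Q \<longleftrightarrow> P = Q"
  by (simp add: rescale_def)

lemma rescale_shift_vec:
  assumes "hbar \<noteq> 0" "mu \<noteq> 0"
  shows "rescale hbar mu (shift_vec hbar mu tau I p m) = rescale hbar mu (p m) + (if m \<in> I then sgnc tau else 0)"
  using assms by (simp add: rescale_def shift_vec_def field_simps)

lemma A_nr_factor_eq_shift_ratio:
  assumes "hbar \<noteq> 0" "mu \<noteq> 0"
  shows "(P - Q - s * \<i> * of_real mu * of_real g) / (P - Q)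
       = shift_ratio (2 * (s * (of_real g / (2 * of_real hbar)))) (rescale hbar mu P - rescale hbar mu Q)"
proof -
  have c: "\<i> / (of_real hbar * of_real mu) \<noteq> 0"
    using assms by simp
  have "(P - Q - s * \<i> * of_real mu * of_real g) / (P - Q)
      = (\<i> / (of_real hbar * of_real mu) * (P - Q - s * \<i> * of_real mu * of_real g))
        / (\<i> / (of_real hbar * of_real mu) * (P - Q))"
    using c by simp
  also have "\<dots> = shift_ratio (2 * (s * (of_real g / (2 * of_real hbar)))) (rescale hbar mu P - rescale hbar mu Q)"
    using assms unfolding shift_ratio_def rescale_diff[symmetric] by (simp add: field_simps)
  finally show ?thesis .
qed

lemma K_kernel_eq_prod_gamma_ratio:
  "K_kernel hbar mu g N l p q = (\<Prod>m\<in>{1..N}. \<Prod>n\<in>{1..N - l}.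
     gamma_ratio (of_real g / (2 * of_real hbar)) (rescale hbar mu (p m) - rescale hbar mu (q n)))"
  unfolding K_kernel_def gamma_ratio_def rescale_diff ..

locale rescaled_kernel =
  fixes hbar mu g :: real and N l :: nat and tau :: bool and p q :: "nat \<Rightarrow> complex"
  assumes hbar_nonzero: "hbar \<noteq> 0" and mu_nonzero: "mu \<noteq> 0"
    and not_int_plus: "\<And>m n. m \<in> {1..N} \<Longrightarrow> n \<in> {1..N - l} \<Longrightarrow>
      rescale hbar mu (p m) - rescale hbar mu (q n) + of_real g / (2 * of_real hbar) \<notin> \<int>"
    and not_int_minus: "\<And>m n. m \<in> {1..N} \<Longrightarrow> n \<in> {1..N - l} \<Longrightarrow>
      rescale hbar mu (p m) - rescale hbar mu (q n) - of_real g / (2 * of_real hbar) \<notin> \<int>"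
begin

definition coupling :: complex where
  "coupling = sgnc tau * (of_real g / (2 * of_real hbar))"

(* The extra shift by -1 for tau = - makes Gamma(z - 1) = Gamma(z) / (z - 1) produce the same
   kernel_ratio factors that Gamma(z + 1) = z Gamma(z) produces for tau = +. *)
definition left_coords :: "nat \<Rightarrow> complex" where
  "left_coords m = rescale hbar mu (p m) + (sgnc tau - 1) / 2"

definition right_coords :: "nat \<Rightarrow> complex" where
  "right_coords n = rescale hbar mu (q n)"

lemma K_kernel_shift:
  assumes "\<And>m n. m \<in> {1..N} \<Longrightarrow> n \<in> {1..N - l} \<Longrightarrow> rescale hbar mu (p' m) - rescale hbar mu (q' n)
             = rescale hbar mu (p m) - rescale hbar mu (q n) + (if P m n then sgnc tau else 0)"
  shows "K_kernel hbar mu g N l p' q' = K_kernel hbar mu g N l p q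
           * (\<Prod>m\<in>{1..N}. \<Prod>n\<in>{1..N - l}. if P m n then kernel_ratio coupling (left_coords m) (right_coords n) else 1)"
proof -
  have kernel_ratio_eq: "kernel_ratio (sgnc tau * (of_real g / (2 * of_real hbar)))
      (rescale hbar mu (p m) - rescale hbar mu (q n) + (sgnc tau - 1) / 2) 0
      = kernel_ratio coupling (left_coords m) (right_coords n)" for m n
    unfolding kernel_ratio_def coupling_def left_coords_def right_coords_def by (simp add: algebra_simps)
  have "K_kernel hbar mu g N l p' q' = (\<Prod>m\<in>{1..N}. \<Prod>n\<in>{1..N - l}.
      gamma_ratio (of_real g / (2 * of_real hbar))
        (rescale hbar mu (p m) - rescale hbar mu (q n) + (if P m n then sgnc tau else 0)))"
    unfolding K_kernel_eq_prod_gamma_ratio by (intro prod.cong refl) (simp add: assms)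
  also have "\<dots> = K_kernel hbar mu g N l p q * (\<Prod>m\<in>{1..N}. \<Prod>n\<in>{1..N - l}. if P m n then
      kernel_ratio (sgnc tau * (of_real g / (2 * of_real hbar)))
        (rescale hbar mu (p m) - rescale hbar mu (q n) + (sgnc tau - 1) / 2) 0 else 1)"
    unfolding K_kernel_eq_prod_gamma_ratio
    by (rule prod_gamma_ratio_shift[OF finite_atLeastAtMost finite_atLeastAtMost not_int_plus not_int_minus])
  finally show ?thesis
    unfolding kernel_ratio_eq .
qed

lemma A_nr_left_generating:
  "(\<Sum>k\<le>N. t ^ k * A_nr hbar mu g tau N k (\<lambda>p'. K_kernel hbar mu g N l p' q) p)
     = K_kernel hbar mu g N l p q * kernel_sum t coupling left_coords {1..N} right_coords {1..N - l}"
  unfolding A_nr_generating kernel_sum_def subset_sum_def sum_distrib_left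
proof (rule sum.cong[OF refl])
  fix I assume "I \<in> Pow {1..N}"
  then have I: "I \<subseteq> {1..N}" by simp
  have "(\<Prod>m\<in>{1..N}. \<Prod>n\<in>{1..N - l}. if m \<in> I then kernel_ratio coupling (left_coords m) (right_coords n) else 1)
      = (\<Prod>m\<in>I. \<Prod>n\<in>{1..N - l}. kernel_ratio coupling (left_coords m) (right_coords n))"
    using prod_if_restrict_left[OF finite_atLeastAtMost I] .
  moreover have "(p m - p m' - sgnc tau * \<i> * of_real mu * of_real g) / (p m - p m')
      = shift_ratio (2 * coupling) (left_coords m - left_coords m')" for m m'
    unfolding A_nr_factor_eq_shift_ratio[OF hbar_nonzero mu_nonzero] coupling_def left_coords_def by simp
  ultimately show "t ^ card I * ((\<Prod>m\<in>I. \<Prod>m'\<in>{1..N} - I. (p m - p m' - sgnc tau * \<i> * of_real mu * of_real g)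
        / (p m - p m')) * K_kernel hbar mu g N l (shift_vec hbar mu tau I p) q)
      = K_kernel hbar mu g N l p q * (t ^ card I * subset_coeff (2 * coupling) left_coords {1..N} I
        * (\<Prod>m\<in>I. \<Prod>n\<in>{1..N - l}. kernel_ratio coupling (left_coords m) (right_coords n)) * (\<Prod>j\<in>{1..N} - I. 1))"
    using K_kernel_shift[of "shift_vec hbar mu tau I p" q "\<lambda>m n. m \<in> I"]
    by (simp add: subset_coeff_def rescale_shift_vec[OF hbar_nonzero mu_nonzero])
qed

lemma A_nr_right_generating:
  "(\<Sum>k\<le>N - l. t ^ k * A_nr hbar mu g (\<not> tau) (N - l) k (\<lambda>q'. K_kernel hbar mu g N l p q') q)
     = K_kernel hbar mu g N l p q * kernel_sum t (- coupling) right_coords {1..N - l} left_coords {1..N}"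
  unfolding A_nr_generating kernel_sum_neg subset_sum_def sum_distrib_left
proof (rule sum.cong[OF refl])
  fix J assume "J \<in> Pow {1..N - l}"
  then have J: "J \<subseteq> {1..N - l}" by simp
  have "sgnc (\<not> tau) = - sgnc tau"
    by (simp add: sgnc_def)
  then have "(q n - q n' - sgnc (\<not> tau) * \<i> * of_real mu * of_real g) / (q n - q n')
      = shift_ratio (- (2 * coupling)) (right_coords n - right_coords n')" for n n'
    unfolding A_nr_factor_eq_shift_ratio[OF hbar_nonzero mu_nonzero] coupling_def right_coords_def by simp
  moreover have "rescale hbar mu (p m) - rescale hbar mu (shift_vec hbar mu (\<not> tau) J q n)
      = rescale hbar mu (p m) - rescale hbar mu (q n) + (if n \<in> J then sgnc tau else 0)" for m n
    by (simp add: rescale_shift_vec[OF hbar_nonzero mu_nonzero] sgnc_def)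
  ultimately show "t ^ card J * ((\<Prod>n\<in>J. \<Prod>n'\<in>{1..N - l} - J. (q n - q n' - sgnc (\<not> tau) * \<i> * of_real mu * of_real g)
        / (q n - q n')) * K_kernel hbar mu g N l p (shift_vec hbar mu (\<not> tau) J q))
      = K_kernel hbar mu g N l p q * (t ^ card J * subset_coeff (- (2 * coupling)) right_coords {1..N - l} J
        * (\<Prod>n\<in>J. \<Prod>m\<in>{1..N}. kernel_ratio coupling (left_coords m) (right_coords n)) * (\<Prod>j\<in>{1..N - l} - J. 1))"
    using K_kernel_shift[of p "shift_vec hbar mu (\<not> tau) J q" "\<lambda>m n. n \<in> J"]
      prod_if_restrict_right[OF finite_atLeastAtMost J, where S = "{1..N}"
        and f = "\<lambda>m n. kernel_ratio coupling (left_coords m) (right_coords n)"]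
    by (simp add: subset_coeff_def)
qed

lemma admissible_coords:
  assumes "inj_on p {1..N}" "inj_on q {1..N - l}"
  shows "admissible coupling left_coords {1..N} right_coords {1..N - l}"
  unfolding admissible_def
proof (intro conjI ballI finite_atLeastAtMost)
  show "inj_on left_coords {1..N}"
  proof (rule inj_onI)
    fix m m' assume "m \<in> {1..N}" "m' \<in> {1..N}" "left_coords m = left_coords m'"
    then show "m = m'"
      using inj_onD[OF assms(1)] by (simp add: left_coords_def rescale_eq_iff[OF hbar_nonzero mu_nonzero])
  qed
  show "inj_on right_coords {1..N - l}"
  proof (rule inj_onI)
    fix n n' assume "n \<in> {1..N - l}" "n' \<in> {1..N - l}" "right_coords n = right_coords n'"
    then show "n = n'"
      using inj_onD[OF assms(2)] by (simp add: right_coords_def rescale_eq_iff[OF hbar_nonzero mu_nonzero])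
  qed
  fix m n assume mn: "m \<in> {1..N}" "n \<in> {1..N - l}"
  define D where "D = rescale hbar mu (p m) - rescale hbar mu (q n)"
  define \<alpha> where "\<alpha> = (of_real g / (2 * of_real hbar) :: complex)"
  have "D + \<alpha> \<notin> \<int>" "D - \<alpha> \<notin> \<int>"
    using not_int_plus[OF mn] not_int_minus[OF mn] by (simp_all add: D_def \<alpha>_def)
  moreover have "left_coords m - right_coords n + coupling = (if tau then D + \<alpha> else (D - \<alpha>) - 1)"
    "left_coords m - right_coords n - coupling = (if tau then D - \<alpha> else (D + \<alpha>) - 1)"
    by (simp_all add: left_coords_def right_coords_def coupling_def sgnc_def D_def \<alpha>_def algebra_simps)
  ultimately show "left_coords m - right_coords n + coupling \<noteq> 0" "left_coords m - right_coords n - coupling \<noteq> 0"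
    by (auto simp: right_minus_eq)
qed

end

theorem theorem4p6:
  fixes hbar mu g :: real and N l k :: nat and tau :: bool
    and p q :: "nat \<Rightarrow> complex"
  assumes "hbar > 0" and "mu > 0" and "g > 0"
    and "l \<le> N" and "1 \<le> k" and "k \<le> N"
    and "\<And>m m'. m \<in> {1..N} \<Longrightarrow> m' \<in> {1..N} \<Longrightarrow> m \<noteq> m' \<Longrightarrow> p m \<noteq> p m'"
    and "\<And>n n'. n \<in> {1..N-l} \<Longrightarrow> n' \<in> {1..N-l} \<Longrightarrow> n \<noteq> n' \<Longrightarrow> q n \<noteq> q n'"
    and "\<And>m n. m \<in> {1..N} \<Longrightarrow> n \<in> {1..N-l} \<Longrightarrow>
          \<i> * (p m - q n) / (of_real hbar * of_real mu) + of_real g / (2 * of_real hbar) \<notin> \<int>"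
    and "\<And>m n. m \<in> {1..N} \<Longrightarrow> n \<in> {1..N-l} \<Longrightarrow>
          \<i> * (p m - q n) / (of_real hbar * of_real mu) - of_real g / (2 * of_real hbar) \<notin> \<int>"
  shows "A_nr hbar mu g tau N k (\<lambda>p'. K_kernel hbar mu g N l p' q) p =
         (\<Sum>j=0..min k l. of_nat (l choose j) *
            A_nr hbar mu g (\<not> tau) (N - l) (k - j) (\<lambda>q'. K_kernel hbar mu g N l p q') q)"
proof -
  interpret rescaled_kernel hbar mu g N l tau p q
    using assms(1,2,9,10) by unfold_locales (simp_all add: rescale_diff)
  let ?L = "\<lambda>k. A_nr hbar mu g tau N k (\<lambda>p'. K_kernel hbar mu g N l p' q) p"
  let ?R = "\<lambda>k. A_nr hbar mu g (\<not> tau) (N - l) k (\<lambda>q'. K_kernel hbar mu g N l p q') q"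
  have adm: "admissible coupling left_coords {1..N} right_coords {1..N - l}"
    by (intro admissible_coords inj_onI) (use assms(7,8) in blast)+
  have "(1 + t) ^ (N - l) * kernel_sum t coupling left_coords {1..N} right_coords {1..N - l}
      = (1 + t) ^ (N - l + l) * kernel_sum t (- coupling) right_coords {1..N - l} left_coords {1..N}" for t
    using kernel_identity_if_admissible[OF adm, of t] assms(4) by (simp add: kernel_identity_def)
  then have "(1 + t) ^ (N - l) * (\<Sum>k\<le>N. t ^ k * ?L k) = (1 + t) ^ (N - l + l) * (\<Sum>k\<le>N - l. t ^ k * ?R k)" for t
    unfolding A_nr_left_generating A_nr_right_generating by (metis mult.left_commute)
  then have "?L k = (\<Sum>j\<le>k. of_nat (l choose j) * ?R (k - j))"
    by (rule coeff_eq_binomial_convolution) (simp_all add: A_nr_eq_0)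
  also have "\<dots> = (\<Sum>j=0..min k l. of_nat (l choose j) * ?R (k - j))"
    by (rule sum.mono_neutral_right) auto
  finally show ?thesis .
qed

end
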